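(* Let $G_1,G_2,H_1,H_2\in SL^+_{sym}(2)$. Then $$K^{min}=\sqrt{\lambda_{\max}\big(G_1^{-1/2}G_2G_1^{-1/2}\big)\ \lambda_{\max}\big(H_1^{-1/2}H_2H_1^{-1/2}\big)}.$$
   Context: $SL^+_{sym}(2)$: real symmetric positive definite $2\times2$ matrices with determinant $1$; $SL(2)$: real $2\times2$ matrices of determinant $1$; $\lambda_{\max}(M)$: largest eigenvalue of a symmetric $M$; $M^{-1/2}$ is the positive definite square root of $M^{-1}$. For $G_1,G_2,H_1,H_2\in SL^+_{sym}(2)$ define $$K^{min}:=\min_{A,B\in SL(2)}\ \max_{i=1,2}\ \lambda_{\max}(B^TG_iB)\,\lambda_{\max}(A^TH_iA).$$ *)

theory Defs
  imports "HOL-Analysis.Analysis"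
begin

type_synonym mat2 = "real^2^2"

definition sym_mat :: "mat2 \<Rightarrow> bool" where
  "sym_mat M \<longleftrightarrow> transpose M = M"

definition pos_def :: "mat2 \<Rightarrow> bool" where
  "pos_def M \<longleftrightarrow> sym_mat M \<and> (\<forall>x::real^2. x \<noteq> 0 \<longrightarrow> x \<bullet> (M *v x) > 0)"

definition SL_sym_pos :: "mat2 set" where
  "SL_sym_pos = {M. pos_def M \<and> det M = 1}"

definition SL2 :: "mat2 set" where
  "SL2 = {A. det A = 1}"

definition eigenvalues :: "mat2 \<Rightarrow> real set" where
  "eigenvalues M = {c. \<exists>v. v \<noteq> 0 \<and> M *v v = c *\<^sub>R v}"

definition lambda_max :: "mat2 \<Rightarrow> real" where
  "lambda_max M = Max (eigenvalues M)"

definition inv_sqrt :: "mat2 \<Rightarrow> mat2" where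
  "inv_sqrt M = (THE S. pos_def S \<and> S ** S = matrix_inv M)"

definition K_values :: "mat2 \<Rightarrow> mat2 \<Rightarrow> mat2 \<Rightarrow> mat2 \<Rightarrow> real set" where
  "K_values G1 G2 H1 H2 =
     {max (lambda_max (transpose B ** G1 ** B) * lambda_max (transpose A ** H1 ** A))
          (lambda_max (transpose B ** G2 ** B) * lambda_max (transpose A ** H2 ** A))
      | A B. A \<in> SL2 \<and> B \<in> SL2}"

text \<open>K^min: the minimum over A,B in SL(2); defined as the infimum, attainment is stated separately.\<close>
definition K_min :: "mat2 \<Rightarrow> mat2 \<Rightarrow> mat2 \<Rightarrow> mat2 \<Rightarrow> real" where
  "K_min G1 G2 H1 H2 = Inf (K_values G1 G2 H1 H2)"

end

theory Submission
  imports Defs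
begin

text \<open>
  For \<open>M \<in> SL\<^sup>+\<^sub>s\<^sub>y\<^sub>m(2)\<close> the eigenvalues are \<open>\<lambda>\<close> and
  \<open>1/\<lambda>\<close> with \<open>\<lambda> \<ge> 1\<close>, so \<open>\<lambda>\<^sub>m\<^sub>a\<^sub>x(M) = larger_root (trace M)\<close>, the larger root of
  \<open>x\<^sup>2 - (trace M) x + 1\<close>. The pair \<open>(G1, G2)\<close> has the congruence invariant
  \<open>rel_trace G1 G2 = trace (adj G1 \<cdot> G2) = trace (G1\<^sup>-\<^sup>1 G2)\<close>, unchanged under
  \<open>G \<mapsto> B\<^sup>T G B\<close> for \<open>B \<in> SL(2)\<close>, and \<open>\<mu>\<^sub>G = larger_root (rel_trace G1 G2)\<close> equals
  \<open>\<lambda>\<^sub>m\<^sub>a\<^sub>x(G1\<^sup>-\<^sup>1\<^sup>/\<^sup>2 G2 G1\<^sup>-\<^sup>1\<^sup>/\<^sup>2)\<close>.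

  (1) Lower bound: \<open>\<mu>\<^sub>G \<le> \<lambda>\<^sub>m\<^sub>a\<^sub>x(B\<^sup>T G1 B) \<lambda>\<^sub>m\<^sub>a\<^sub>x(B\<^sup>T G2 B)\<close> for all \<open>B\<close> (an explicit
  Cauchy-Schwarz estimate), hence the objective is at least \<open>\<surd>(\<mu>\<^sub>G \<mu>\<^sub>H)\<close>.
  (2) Attainment: choosing \<open>B B\<^sup>T\<close> proportional to \<open>adj (G1 + G2)\<close> balances both traces at
  \<open>s = \<surd>(rel_trace G1 G2 + 2)\<close>, and then both largest eigenvalues equal \<open>larger_root s = \<surd>\<mu>\<^sub>G\<close>.
  (3) The square root \<open>G\<^sup>-\<^sup>1\<^sup>/\<^sup>2\<close> is identified explicitly via Cayley-Hamilton.
\<close>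

lemma mat2_eq: "(M::mat2) = N \<longleftrightarrow> M$1$1 = N$1$1 \<and> M$1$2 = N$1$2 \<and> M$2$1 = N$2$1 \<and> M$2$2 = N$2$2"
  by (auto simp: vec_eq_iff forall_2)

lemma vec2_eq: "(v::real^2) = w \<longleftrightarrow> v$1 = w$1 \<and> v$2 = w$2"
  by (auto simp: vec_eq_iff forall_2)

lemma trace_2: "trace (M::mat2) = M$1$1 + M$2$2"
  by (simp add: trace_def sum_2)

lemma matrix_mult_2: "((M::mat2) ** N)$i$j = M$i$1 * N$1$j + M$i$2 * N$2$j"
  by (simp add: matrix_matrix_mult_def sum_2)

lemma matrix_vector_mult_2: "((M::mat2) *v v)$i = M$i$1 * v$1 + M$i$2 * v$2"
  by (simp add: matrix_vector_mult_def sum_2)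

lemma inner_2: "(v::real^2) \<bullet> w = v$1*w$1 + v$2*w$2"
  by (simp add: inner_vec_def sum_2)

lemma mat_2: "(mat c :: mat2)$i$j = (if i = j then c else 0)"
  by (simp add: mat_def)

definition adj2 :: "mat2 \<Rightarrow> mat2" where
  "adj2 M = vector [vector [M$2$2, - M$1$2], vector [- M$2$1, M$1$1]]"

lemma adj2_simps [simp]:
  "adj2 M $1$1 = M$2$2" "adj2 M $1$2 = - M$1$2" "adj2 M $2$1 = - M$2$1" "adj2 M $2$2 = M$1$1"
  by (simp_all add: adj2_def)

lemma adj2_mult: "M ** adj2 M = mat (det M)" "adj2 M ** M = mat (det M)"
  by (simp_all add: mat2_eq matrix_mult_2 det_2 mat_def algebra_simps)

lemma cayley_hamilton_2: "(M::mat2) ** M = trace M *\<^sub>R M - mat (det M)"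
  by (simp add: mat2_eq matrix_mult_2 det_2 trace_2 mat_def algebra_simps)

text \<open>The relative trace \<open>trace (G1\<^sup>-\<^sup>1 G2)\<close> of two unimodular forms; it is the polarisation
  of the determinant, hence symmetric.\<close>
definition rel_trace :: "mat2 \<Rightarrow> mat2 \<Rightarrow> real" where
  "rel_trace G1 G2 = trace (adj2 G1 ** G2)"

lemma det_add_2: "det (M + N :: mat2) = det M + det N + rel_trace M N"
  by (simp add: rel_trace_def det_2 trace_2 matrix_mult_2 algebra_simps)

lemma rel_trace_comm: "rel_trace M N = rel_trace N M"
  by (simp add: rel_trace_def trace_2 matrix_mult_2 algebra_simps)

lemma det_adj2: "det (adj2 M) = det M"
  by (simp add: det_2)

lemma det_scaleR_2: "det (c *\<^sub>R M :: mat2) = c^2 * det M"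
  by (simp add: det_2 power2_eq_square algebra_simps)

lemma quadratic_form_2:
  fixes M :: mat2 and x :: "real^2"
  assumes "M$2$1 = M$1$2"
  shows "x \<bullet> (M *v x) = M$1$1 * x$1^2 + 2 * M$1$2 * x$1 * x$2 + M$2$2 * x$2^2"
  using assms by (simp add: inner_2 matrix_vector_mult_2 power2_eq_square algebra_simps)

lemma pos_def_iff: "pos_def M \<longleftrightarrow> M$2$1 = M$1$2 \<and> M$1$1 > 0 \<and> det M > 0"
proof
  assume "pos_def M"
  then have sym: "transpose M = M" and pos: "\<And>x. x \<noteq> 0 \<Longrightarrow> x \<bullet> (M *v x) > 0"
    by (auto simp: pos_def_def sym_mat_def)
  have "(transpose M)$1$2 = M$1$2" using sym by simp
  then have s: "M$2$1 = M$1$2" by (simp add: transpose_def)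
  have "(vector [1, 0] :: real^2) \<noteq> 0" by (simp add: vec2_eq)
  from pos[OF this] have a: "M$1$1 > 0" by (simp add: inner_2 matrix_vector_mult_2)
  have "(vector [M$1$2, - M$1$1] :: real^2) \<noteq> 0" using a by (simp add: vec2_eq)
  from pos[OF this] have "0 < M$1$1 * det M"
    using s by (simp add: inner_2 matrix_vector_mult_2 det_2 algebra_simps)
  then show "M$2$1 = M$1$2 \<and> M$1$1 > 0 \<and> det M > 0"
    using s a by (simp add: zero_less_mult_iff)
next
  assume M: "M$2$1 = M$1$2 \<and> M$1$1 > 0 \<and> det M > 0"
  have sym: "sym_mat M" unfolding sym_mat_def using M by (simp add: mat2_eq transpose_def)
  let ?a = "M$1$1" and ?b = "M$1$2"
  have d: "det M = ?a * M$2$2 - ?b * ?b" using M by (simp add: det_2)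
  have "x \<bullet> (M *v x) > 0" if x: "x \<noteq> 0" for x :: "real^2"
  proof -
    have sq: "?a * (x \<bullet> (M *v x)) = (?a * x$1 + ?b * x$2)^2 + det M * x$2^2"
      using M by (simp add: quadratic_form_2 d power2_eq_square algebra_simps)
    have "(?a * x$1 + ?b * x$2)^2 + det M * x$2^2 > 0"
    proof (cases "x$2 = 0")
      case True
      then have "x$1 \<noteq> 0" using x by (simp add: vec2_eq)
      then show ?thesis using True M by simp
    next
      case False
      then show ?thesis using M by (intro add_nonneg_pos) auto
    qed
    then have "?a * (x \<bullet> (M *v x)) > 0" by (simp only: sq)
    then show ?thesis using M zero_less_mult_pos by blast
  qed
  then show "pos_def M" using sym by (simp add: pos_def_def)
qed

lemma SL_sym_pos_iff: "M \<in> SL_sym_pos \<longleftrightarrow> M$2$1 = M$1$2 \<and> M$1$1 > 0 \<and> det M = 1"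
  by (auto simp: SL_sym_pos_def pos_def_iff)

lemma SL_sym_pos_entries:
  assumes "M \<in> SL_sym_pos"
  shows "M$1$1 > 0" "M$2$2 > 0" "M$2$1 = M$1$2" "M$1$1 * M$2$2 - M$1$2 * M$1$2 = 1"
proof -
  show a: "M$1$1 > 0" and s: "M$2$1 = M$1$2" using assms by (simp_all add: SL_sym_pos_iff)
  show d: "M$1$1 * M$2$2 - M$1$2 * M$1$2 = 1" using assms s by (simp add: SL_sym_pos_iff det_2)
  have "0 \<le> M$1$2 * M$1$2" by simp
  with d a show "M$2$2 > 0" by (smt (verit) zero_less_mult_iff)
qed

lemma SL_sym_pos_congruence:
  assumes G: "G \<in> SL_sym_pos" and B: "det B = 1"
  shows "transpose B ** G ** B \<in> SL_sym_pos"
proof -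
  let ?P = "transpose B ** G ** B" and ?v = "column 1 B"
  have g: "G$2$1 = G$1$2" "det G = 1" using G by (simp_all add: SL_sym_pos_iff)
  have "?v \<noteq> 0"
    using B by (auto simp: vec2_eq column_def det_2)
  then have "?v \<bullet> (G *v ?v) > 0" using G by (simp add: SL_sym_pos_def pos_def_def)
  moreover have "?P$1$1 = ?v \<bullet> (G *v ?v)"
    by (simp add: inner_2 matrix_vector_mult_2 matrix_mult_2 transpose_def column_def algebra_simps)
  moreover have "?P$2$1 = ?P$1$2"
    using g by (simp add: matrix_mult_2 transpose_def algebra_simps)
  moreover have "det ?P = 1" using g B by (simp add: det_mul det_transpose)
  ultimately show ?thesis by (simp add: SL_sym_pos_iff)
qed

text \<open>The larger root of \<open>x\<^sup>2 - t x + 1\<close>; for \<open>t \<ge> 2\<close> it is the \<open>L \<ge> 1\<close> with \<open>L + 1/L = t\<close>.\<close>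
definition larger_root :: "real \<Rightarrow> real" where
  "larger_root t = (t + sqrt (t * t - 4)) / 2"

lemma larger_root_ge_1:
  assumes "t \<ge> 2" shows "larger_root t \<ge> 1"
proof -
  have "2 * 2 \<le> t * t" using assms by (intro mult_mono) auto
  then have "0 \<le> sqrt (t * t - 4)" by simp
  then have "2 \<le> t + sqrt (t * t - 4)" using assms by linarith
  then show ?thesis by (simp add: larger_root_def)
qed

lemma larger_root_plus_inverse:
  assumes "t \<ge> 2" shows "larger_root t + 1 / larger_root t = t"
proof -
  let ?X = "sqrt (t * t - 4)"
  have "2 * 2 \<le> t * t" using assms by (intro mult_mono) auto
  then have XX: "?X * ?X = t * t - 4" and X0: "?X \<ge> 0" by simp_all
  have "t + ?X > 0" using X0 assms by linarith
  then have "1 / larger_root t = (t - ?X) / 2"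
    using XX by (simp add: larger_root_def field_simps)
  then show ?thesis by (simp add: larger_root_def field_simps)
qed

lemma larger_root_of_plus_inverse:
  assumes "L \<ge> 1" shows "larger_root (L + 1 / L) = L"
proof -
  have L0: "L > 0" using assms by simp
  have "(L + 1/L) * (L + 1/L) - 4 = (L - 1/L) * (L - 1/L)" using L0 by (simp add: field_simps)
  moreover have "L - 1/L \<ge> 0" using assms L0 mult_mono[OF assms assms] by (simp add: field_simps)
  ultimately have "sqrt ((L + 1/L) * (L + 1/L) - 4) = L - 1/L" by simp
  then show ?thesis by (simp add: larger_root_def)
qed

lemma larger_root_mono:
  assumes "2 \<le> s" "s \<le> t" shows "larger_root s \<le> larger_root t"
proof -
  have "s * s \<le> t * t" using assms by (simp add: mult_mono)
  then have "sqrt (s * s - 4) \<le> sqrt (t * t - 4)" by simp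
  then show ?thesis unfolding larger_root_def using assms(2)
    by (intro divide_right_mono add_mono) auto
qed

text \<open>Squaring \<open>L\<close> corresponds to \<open>t \<mapsto> t\<^sup>2 - 2\<close>, as \<open>L\<^sup>2 + L\<^sup>-\<^sup>2 = (L + L\<^sup>-\<^sup>1)\<^sup>2 - 2\<close>.\<close>
lemma larger_root_square:
  assumes "s \<ge> 2" shows "larger_root (s * s - 2) = (larger_root s)\<^sup>2"
proof -
  define L where "L = larger_root s"
  have L1: "L \<ge> 1" and Ls: "L + 1/L = s"
    using larger_root_ge_1 larger_root_plus_inverse assms by (simp_all add: L_def)
  have "L\<^sup>2 \<ge> 1" using L1 by (simp add: one_le_power)
  moreover have "s * s - 2 = L\<^sup>2 + 1 / L\<^sup>2"
    using L1 unfolding Ls[symmetric] by (simp add: field_simps power2_eq_square)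
  ultimately show ?thesis by (simp add: larger_root_of_plus_inverse L_def)
qed

lemma eigenvalues_iff: "c \<in> eigenvalues (M::mat2) \<longleftrightarrow> c * c - trace M * c + det M = 0"
proof
  assume "c \<in> eigenvalues M"
  then obtain v where v: "v \<noteq> 0" "M *v v = c *\<^sub>R v" by (auto simp: eigenvalues_def)
  have e1: "M$1$1 * v$1 + M$1$2 * v$2 = c * v$1" and e2: "M$2$1 * v$1 + M$2$2 * v$2 = c * v$2"
    using v(2) by (auto simp: vec2_eq matrix_vector_mult_2)
  let ?p = "c * c - trace M * c + det M"
  have "?p * v$1 = (M$2$2 - c) * (M$1$1 * v$1 + M$1$2 * v$2 - c * v$1)
                    - M$1$2 * (M$2$1 * v$1 + M$2$2 * v$2 - c * v$2)"
   and "?p * v$2 = (M$1$1 - c) * (M$2$1 * v$1 + M$2$2 * v$2 - c * v$2)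
                    - M$2$1 * (M$1$1 * v$1 + M$1$2 * v$2 - c * v$1)"
    by (simp_all add: trace_2 det_2 algebra_simps)
  then have "?p * v$1 = 0" "?p * v$2 = 0" using e1 e2 by simp_all
  moreover have "v$1 \<noteq> 0 \<or> v$2 \<noteq> 0" using v(1) by (auto simp: vec2_eq)
  ultimately show "?p = 0" by auto
next
  assume h: "c * c - trace M * c + det M = 0"
  let ?a = "M$1$1" and ?b = "M$1$2" and ?e = "M$2$1" and ?d = "M$2$2"
  have h': "(?a - c) * (?d - c) - ?b * ?e = 0" using h by (simp add: trace_2 det_2 algebra_simps)
  text \<open>An explicit eigenvector, read off from a nonzero row of \<open>M - c I\<close>.\<close>
  define v :: "real^2" where "v = (if ?b \<noteq> 0 \<or> c \<noteq> ?a then vector [?b, c - ?a]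
      else if ?d \<noteq> c \<or> ?e \<noteq> 0 then vector [?d - c, - ?e] else vector [1, 0])"
  have "v \<noteq> 0" unfolding v_def by (auto simp: vec2_eq)
  moreover have "M *v v = c *\<^sub>R v" using h'
    unfolding v_def by (auto simp: vec2_eq matrix_vector_mult_2 algebra_simps)
  ultimately show "c \<in> eigenvalues M" by (auto simp: eigenvalues_def)
qed

text \<open>A unimodular matrix with trace at least 2 has eigenvalues \<open>L\<close> and \<open>1/L\<close>, \<open>L \<ge> 1\<close>.\<close>
lemma lambda_max_det_1:
  assumes "det (M::mat2) = 1" "trace M \<ge> 2"
  shows "lambda_max M = larger_root (trace M)"
proof -
  define L where "L = larger_root (trace M)"
  have L1: "L \<ge> 1" and Ls: "L + 1/L = trace M"
    using larger_root_ge_1 larger_root_plus_inverse assms(2) by (simp_all add: L_def)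
  have factor: "c * c - trace M * c + det M = (c - L) * (c - 1/L)" for c
    unfolding assms(1) Ls[symmetric] using L1 by (simp add: field_simps)
  have "c \<in> eigenvalues M \<longleftrightarrow> c = L \<or> c = 1/L" for c
    by (simp only: eigenvalues_iff factor mult_eq_0_iff right_minus_eq)
  then have "eigenvalues M = {L, 1/L}" by blast
  moreover have "1/L \<le> L" using L1 by (smt (verit) divide_le_eq_1)
  ultimately show ?thesis by (simp add: lambda_max_def max_def L_def)
qed

text \<open>By AM-GM on the diagonal, \<open>trace M \<ge> 2\<close> for \<open>M \<in> SL\<^sup>+\<^sub>s\<^sub>y\<^sub>m(2)\<close>.\<close>
lemma trace_SL_sym_pos_ge_2: assumes "M \<in> SL_sym_pos" shows "trace M \<ge> 2"
proof -
  note m = SL_sym_pos_entries[OF assms]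
  have "(trace M)\<^sup>2 = (M$1$1 - M$2$2)\<^sup>2 + 4 * (1 + M$1$2 * M$1$2)"
    using m(4) by (simp add: trace_2 power2_eq_square algebra_simps)
  then have "2\<^sup>2 \<le> (trace M)\<^sup>2" by simp
  then show ?thesis by (rule power2_le_imp_le) (use m in \<open>simp add: trace_2\<close>)
qed

lemma lambda_max_SL_sym_pos:
  assumes "M \<in> SL_sym_pos"
  shows "lambda_max M = larger_root (trace M)" "lambda_max M \<ge> 1"
    "trace M = lambda_max M + 1 / lambda_max M"
proof -
  have t: "trace M \<ge> 2" by (rule trace_SL_sym_pos_ge_2[OF assms])
  show l: "lambda_max M = larger_root (trace M)"
    using assms t by (intro lambda_max_det_1) (simp_all add: SL_sym_pos_def)
  show "lambda_max M \<ge> 1" unfolding l using t by (rule larger_root_ge_1)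
  show "trace M = lambda_max M + 1 / lambda_max M" unfolding l using t by (simp add: larger_root_plus_inverse)
qed

lemma rel_trace_symmetric_entries:
  assumes "P$2$1 = P$1$2" "Q$2$1 = Q$1$2"
  shows "rel_trace P Q = P$2$2 * Q$1$1 - 2 * P$1$2 * Q$1$2 + P$1$1 * Q$2$2"
  using assms by (simp add: rel_trace_def trace_2 matrix_mult_2)

lemma rel_trace_congruence:
  assumes "det B = 1"
  shows "rel_trace (transpose B ** G1 ** B) (transpose B ** G2 ** B) = rel_trace G1 G2"
proof -
  have "rel_trace (transpose B ** G1 ** B) (transpose B ** G2 ** B) = (det B)\<^sup>2 * rel_trace G1 G2"
    by (simp add: rel_trace_def trace_2 matrix_mult_2 transpose_def det_2 power2_eq_square algebra_simps)
  then show ?thesis using assms by simp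
qed

lemma rel_trace_lower_real:
  fixes a b c d e g :: real
  assumes "a > 0" "c > 0" "d > 0" "g > 0" and "a * c - b * b = 1" "d * g - e * e = 1"
  shows "2 \<le> c * d - 2 * b * e + a * g"
proof -
  have "(c * d + a * g)\<^sup>2 = (c * d - a * g)\<^sup>2 + 4 * (a * c) * (d * g)"
    by (simp add: power2_eq_square algebra_simps)
  also have "\<dots> = (c * d - a * g)\<^sup>2 + 4 * (1 + b * b) * (1 + e * e)"
    using assms(5,6) by (simp add: algebra_simps)
  also have "\<dots> = (c * d - a * g)\<^sup>2 + 4 * (b - e)\<^sup>2 + (2 + 2 * b * e)\<^sup>2"
    by (simp add: power2_eq_square algebra_simps)
  finally have "(2 + 2 * b * e)\<^sup>2 \<le> (c * d + a * g)\<^sup>2" by simp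
  then have "2 + 2 * b * e \<le> c * d + a * g"
    by (rule power2_le_imp_le) (use assms(1-4) in simp)
  then show ?thesis by simp
qed

text \<open>The proof is Cauchy-Schwarz for the traceless parts.\<close>
lemma rel_trace_upper_real:
  fixes a b c d e g L N :: real
  assumes det: "a * c - b * b = 1" "d * g - e * e = 1"
    and L: "L \<ge> 1" "a + c = L + 1/L" and N: "N \<ge> 1" "d + g = N + 1/N"
  shows "c * d - 2 * b * e + a * g \<le> L * N + 1 / (L * N)"
proof -
  let ?s = "(a - c) * (d - g) + 4 * b * e"
  let ?W = "(L - 1/L) * (N - 1/N)"
  have "1/L \<le> L" "1/N \<le> N" using L(1) N(1) by (smt (verit) divide_le_eq_1)+
  then have W0: "?W \<ge> 0" by simp
  let ?r = "2 * e * (a - c) - 2 * b * (d - g)"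
  have cs: "((a - c)\<^sup>2 + 4 * b\<^sup>2) * ((d - g)\<^sup>2 + 4 * e\<^sup>2) = ?s\<^sup>2 + ?r\<^sup>2"
    by (simp add: power2_eq_square algebra_simps)
  have U: "(a - c)\<^sup>2 + 4 * b\<^sup>2 = (L - 1/L)\<^sup>2"
  proof -
    have "(a - c)\<^sup>2 + 4 * b\<^sup>2 = (a + c)\<^sup>2 - 4" using det(1) by (simp add: power2_eq_square algebra_simps)
    also have "\<dots> = (L - 1/L)\<^sup>2" unfolding L(2) using L(1) by (simp add: power2_eq_square field_simps)
    finally show ?thesis .
  qed
  have V: "(d - g)\<^sup>2 + 4 * e\<^sup>2 = (N - 1/N)\<^sup>2"
  proof -
    have "(d - g)\<^sup>2 + 4 * e\<^sup>2 = (d + g)\<^sup>2 - 4" using det(2) by (simp add: power2_eq_square algebra_simps)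
    also have "\<dots> = (N - 1/N)\<^sup>2" unfolding N(2) using N(1) by (simp add: power2_eq_square field_simps)
    finally show ?thesis .
  qed
  have "?W\<^sup>2 = ?s\<^sup>2 + ?r\<^sup>2" unfolding cs[symmetric] U V by (simp add: power_mult_distrib)
  then have "?s\<^sup>2 \<le> ?W\<^sup>2" using zero_le_power2[of ?r] by linarith
  then have "(- ?s)\<^sup>2 \<le> ?W\<^sup>2" by (simp only: power2_minus)
  then have s: "- ?s \<le> ?W" using W0 by (rule power2_le_imp_le)
  have "2 * (c * d - 2 * b * e + a * g) = (a + c) * (d + g) - ?s" by (simp add: algebra_simps)
  also have "\<dots> \<le> (L + 1/L) * (N + 1/N) + ?W" using s L(2) N(2) by simp
  also have "\<dots> = 2 * (L * N + 1 / (L * N))" using L(1) N(1) by (simp add: field_simps)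
  finally show ?thesis by simp
qed

lemma rel_trace_ge_2:
  assumes "P \<in> SL_sym_pos" "Q \<in> SL_sym_pos"
  shows "2 \<le> rel_trace P Q"
proof -
  note p = SL_sym_pos_entries[OF assms(1)] and q = SL_sym_pos_entries[OF assms(2)]
  show ?thesis using rel_trace_lower_real[OF p(1,2) q(1,2) p(4) q(4)]
    by (simp add: rel_trace_symmetric_entries p(3) q(3))
qed

text \<open>Submultiplicativity in disguise: \<open>\<lambda>\<^sub>m\<^sub>a\<^sub>x(P\<^sup>-\<^sup>1Q) \<le> \<lambda>\<^sub>m\<^sub>a\<^sub>x(P) \<lambda>\<^sub>m\<^sub>a\<^sub>x(Q)\<close>.\<close>
lemma larger_root_rel_trace_le:
  assumes P: "P \<in> SL_sym_pos" and Q: "Q \<in> SL_sym_pos"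
  shows "larger_root (rel_trace P Q) \<le> lambda_max P * lambda_max Q"
proof -
  note p = SL_sym_pos_entries[OF P] and q = SL_sym_pos_entries[OF Q]
  note lp = lambda_max_SL_sym_pos[OF P] and lq = lambda_max_SL_sym_pos[OF Q]
  let ?LN = "lambda_max P * lambda_max Q"
  have "rel_trace P Q \<le> ?LN + 1 / ?LN"
    using rel_trace_upper_real[OF p(4) q(4) lp(2) _ lq(2)] lp(3) lq(3)
    by (simp add: rel_trace_symmetric_entries p(3) q(3) trace_2)
  then have "larger_root (rel_trace P Q) \<le> larger_root (?LN + 1 / ?LN)"
    using rel_trace_ge_2[OF P Q] by (rule larger_root_mono[rotated])
  also have "\<dots> = ?LN"
    using lp(2) lq(2) mult_mono[of 1 "lambda_max P" 1 "lambda_max Q"]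
    by (intro larger_root_of_plus_inverse) simp
  finally show ?thesis .
qed

lemma lambda_max_product_lower_bound:
  assumes "G1 \<in> SL_sym_pos" "G2 \<in> SL_sym_pos" "det B = 1"
  shows "larger_root (rel_trace G1 G2)
           \<le> lambda_max (transpose B ** G1 ** B) * lambda_max (transpose B ** G2 ** B)"
  using larger_root_rel_trace_le[OF SL_sym_pos_congruence SL_sym_pos_congruence] assms
    rel_trace_congruence[OF assms(3)] by metis

lemma matrix_inv_adj2:
  assumes "det (M::mat2) = 1" shows "matrix_inv M = adj2 M"
proof -
  have r: "M ** adj2 M = mat 1" and "adj2 M ** M = mat 1" using assms by (simp_all add: adj2_mult)
  then have "\<exists>M'. M ** M' = mat 1 \<and> M' ** M = mat 1" by blast
  then have inv: "M ** matrix_inv M = mat 1 \<and> matrix_inv M ** M = mat 1"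
    unfolding matrix_inv_def by (rule someI_ex)
  have "matrix_inv M = matrix_inv M ** (M ** adj2 M)" using r by simp
  also have "\<dots> = adj2 M" using inv by (simp add: matrix_mul_assoc)
  finally show ?thesis .
qed

lemma adj2_SL_sym_pos:
  assumes "M \<in> SL_sym_pos" shows "adj2 M \<in> SL_sym_pos"
proof -
  have "M$2$1 = M$1$2" "M$2$2 > 0" "det M = 1"
    using SL_sym_pos_entries[OF assms] assms by (simp_all add: SL_sym_pos_def)
  then show ?thesis by (simp add: SL_sym_pos_iff det_adj2)
qed

lemma trace_square_2: "trace ((M::mat2) ** M) = (trace M)\<^sup>2 - 2 * det M"
  by (simp add: trace_2 matrix_mult_2 det_2 power2_eq_square algebra_simps)

lemma scaleR_matrix_mult_2:
  fixes A B :: mat2 shows "(c *\<^sub>R A) ** (d *\<^sub>R B) = (c * d) *\<^sub>R (A ** B)"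
  by (simp add: mat2_eq matrix_mult_2 algebra_simps)

text \<open>The explicit square root of \<open>N \<in> SL\<^sup>+\<^sub>s\<^sub>y\<^sub>m(2)\<close>: by Cayley-Hamilton a square root \<open>S\<close> with
  \<open>det S = 1\<close> satisfies \<open>N + I = trace S \<cdot> S\<close> and \<open>(trace S)\<^sup>2 = trace N + 2\<close>.\<close>
definition sqrt_SL_sym_pos :: "mat2 \<Rightarrow> mat2" where
  "sqrt_SL_sym_pos N = (1 / sqrt (trace N + 2)) *\<^sub>R (N + mat 1)"

lemma sqrt_SL_sym_pos:
  assumes N: "N \<in> SL_sym_pos"
  shows "pos_def (sqrt_SL_sym_pos N)" "sqrt_SL_sym_pos N ** sqrt_SL_sym_pos N = N"
proof -
  note n = SL_sym_pos_entries[OF N]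
  define r where "r = sqrt (trace N + 2)"
  have t: "trace N \<ge> 2" by (rule trace_SL_sym_pos_ge_2[OF N])
  then have r0: "r > 0" and rr: "r * r = trace N + 2" by (simp_all add: r_def)
  have dN: "det N = 1" using N by (simp add: SL_sym_pos_def)
  have "det (N + mat 1) = trace N + 2"
    using dN by (simp add: det_add_2 rel_trace_def trace_2 matrix_mult_2 mat_2)
  then have "det (sqrt_SL_sym_pos N) = 1"
    using r0 rr t by (simp add: sqrt_SL_sym_pos_def r_def[symmetric] det_scaleR_2 power2_eq_square)
  moreover have "sqrt_SL_sym_pos N $1$1 > 0" "sqrt_SL_sym_pos N $2$1 = sqrt_SL_sym_pos N $1$2"
    using n r0 by (simp_all add: sqrt_SL_sym_pos_def r_def[symmetric] mat_2)
  ultimately show "pos_def (sqrt_SL_sym_pos N)" by (simp add: pos_def_iff)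
  have "(N + mat 1) ** (N + mat 1) = (trace N + 2) *\<^sub>R N"
    using dN n(3) by (simp add: mat2_eq matrix_mult_2 trace_2 det_2 mat_2 algebra_simps)
  then show "sqrt_SL_sym_pos N ** sqrt_SL_sym_pos N = N"
    using r0 rr t by (simp add: sqrt_SL_sym_pos_def r_def[symmetric] scaleR_matrix_mult_2)
qed

lemma sqrt_SL_sym_pos_unique:
  assumes N: "N \<in> SL_sym_pos" and S: "pos_def S" "S ** S = N"
  shows "S = sqrt_SL_sym_pos N"
proof -
  have s: "S$2$1 = S$1$2" "S$1$1 > 0" "det S > 0" using S(1) by (simp_all add: pos_def_iff)
  have "(det S)\<^sup>2 = 1" using S(2) N by (simp add: SL_sym_pos_def power2_eq_square det_mul[symmetric])
  then have dS: "det S = 1" using s(3) by (simp add: power2_eq_1_iff)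
  have "S$2$2 > 0" using s by (simp add: det_2) (smt (verit) mult_nonneg_nonpos zero_le_square)
  then have tS: "trace S > 0" using s(2) by (simp add: trace_2)
  have "trace N + 2 = (trace S)\<^sup>2" using trace_square_2[of S] S(2) dS by simp
  then have r: "sqrt (trace N + 2) = trace S" using tS by simp
  have "N + mat 1 = trace S *\<^sub>R S" using cayley_hamilton_2[of S] S(2) dS by simp
  then show ?thesis using tS by (simp add: sqrt_SL_sym_pos_def r)
qed

lemma inv_sqrt_eq:
  assumes G: "G \<in> SL_sym_pos"
  shows "inv_sqrt G = sqrt_SL_sym_pos (adj2 G)"
proof -
  have "matrix_inv G = adj2 G" using G by (intro matrix_inv_adj2) (simp add: SL_sym_pos_def)
  then show ?thesis
    unfolding inv_sqrt_def using sqrt_SL_sym_pos sqrt_SL_sym_pos_unique adj2_SL_sym_pos[OF G]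
    by (intro the_equality) auto
qed

text \<open>The right-hand side of the theorem in terms of the invariant: \<open>G1\<^sup>-\<^sup>1\<^sup>/\<^sup>2 G2 G1\<^sup>-\<^sup>1\<^sup>/\<^sup>2\<close> is
  unimodular with trace \<open>trace (G1\<^sup>-\<^sup>1 G2)\<close>.\<close>
lemma lambda_max_inv_sqrt:
  assumes G1: "G1 \<in> SL_sym_pos" and G2: "G2 \<in> SL_sym_pos"
  shows "lambda_max (inv_sqrt G1 ** G2 ** inv_sqrt G1) = larger_root (rel_trace G1 G2)"
proof -
  let ?S = "inv_sqrt G1"
  have SS: "?S ** ?S = adj2 G1"
    using inv_sqrt_eq[OF G1] sqrt_SL_sym_pos(2)[OF adj2_SL_sym_pos[OF G1]] by simp
  have "det (?S ** G2 ** ?S) = det (?S ** ?S) * det G2" by (simp add: det_mul)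
  also have "\<dots> = 1" using SS G1 G2 by (simp add: SL_sym_pos_def det_adj2)
  finally have d: "det (?S ** G2 ** ?S) = 1" .
  have "trace (?S ** G2 ** ?S) = trace (?S ** (?S ** G2))" by (rule trace_mul_sym)
  also have "\<dots> = rel_trace G1 G2" by (simp add: matrix_mul_assoc SS rel_trace_def)
  finally have t: "trace (?S ** G2 ** ?S) = rel_trace G1 G2" .
  show ?thesis using lambda_max_det_1[OF d] t rel_trace_ge_2[OF G1 G2] by simp
qed

lemma cholesky_2:
  assumes X: "pos_def X" "det X = 1"
  shows "\<exists>B. det B = 1 \<and> B ** transpose B = X"
proof -
  have x: "X$2$1 = X$1$2" "X$1$1 > 0" using X(1) by (simp_all add: pos_def_iff)
  have d: "X$1$2 * X$1$2 + 1 = X$1$1 * X$2$2" using X(2) x(1) by (simp add: det_2)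
  define u where "u = sqrt (X$1$1)"
  have u0: "u > 0" and uu: "u * u = X$1$1" using x(2) by (simp_all add: u_def)
  define B :: mat2 where "B = vector [vector [u, 0], vector [X$1$2 / u, 1 / u]]"
  have "det B = 1" using u0 by (simp add: B_def det_2)
  moreover have "B ** transpose B = X"
  proof -
    have "X$1$2 / u * (X$1$2 / u) + 1 / u * (1 / u) = (X$1$2 * X$1$2 + 1) / (u * u)"
      by (simp add: add_divide_distrib)
    also have "\<dots> = X$2$2" unfolding d uu using x(2) by simp
    finally show ?thesis using u0 uu x(1)
      by (simp add: B_def mat2_eq matrix_mult_2 transpose_def)
  qed
  ultimately show ?thesis by blast
qed

lemma trace_congruence:
  fixes B G :: mat2 shows "trace (transpose B ** G ** B) = trace (G ** (B ** transpose B))"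
proof -
  have "trace (transpose B ** G ** B) = trace (B ** (transpose B ** G))" by (rule trace_mul_sym)
  also have "\<dots> = trace ((B ** transpose B) ** G)" by (simp only: matrix_mul_assoc)
  also have "\<dots> = trace (G ** (B ** transpose B))" by (rule trace_mul_sym)
  finally show ?thesis .
qed

lemma trace_mult_adj2_add: "trace ((M::mat2) ** adj2 (M + N)) = 2 * det M + rel_trace M N"
  by (simp add: rel_trace_def trace_2 matrix_mult_2 det_2 algebra_simps)

lemma trace_mult_scaleR_2: "trace ((M::mat2) ** (c *\<^sub>R N)) = c * trace (M ** N)"
  by (simp add: trace_2 matrix_mult_2 algebra_simps)

text \<open>One takes \<open>B B\<^sup>T = adj(G1 + G2) / s\<close>, noting \<open>det (G1 + G2) = s\<^sup>2\<close>.\<close>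
lemma balancing_congruence:
  assumes G1: "G1 \<in> SL_sym_pos" and G2: "G2 \<in> SL_sym_pos"
  defines "s \<equiv> sqrt (rel_trace G1 G2 + 2)"
  shows "\<exists>B. det B = 1 \<and> trace (transpose B ** G1 ** B) = s \<and> trace (transpose B ** G2 ** B) = s"
proof -
  note g1 = SL_sym_pos_entries[OF G1] and g2 = SL_sym_pos_entries[OF G2]
  have d1: "det G1 = 1" and d2: "det G2 = 1" using G1 G2 by (simp_all add: SL_sym_pos_def)
  have t: "rel_trace G1 G2 \<ge> 2" by (rule rel_trace_ge_2[OF G1 G2])
  then have s0: "s > 0" and ss: "s * s = rel_trace G1 G2 + 2" by (simp_all add: s_def)
  have dsum: "det (G1 + G2) = s * s" using d1 d2 ss by (simp add: det_add_2)
  define X where "X = (1 / s) *\<^sub>R adj2 (G1 + G2)"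
  have "det X = 1" using s0 dsum by (simp add: X_def det_scaleR_2 det_adj2 power2_eq_square)
  moreover have "X$2$1 = X$1$2" "X$1$1 > 0" using g1(2,3) g2(2,3) s0 by (simp_all add: X_def)
  ultimately have "pos_def X" by (simp add: pos_def_iff)
  with \<open>det X = 1\<close> obtain B where B: "det B = 1" "B ** transpose B = X" using cholesky_2 by blast
  have "trace (transpose B ** G1 ** B) = (2 * det G1 + rel_trace G1 G2) / s"
    by (simp add: trace_congruence B(2) X_def trace_mult_scaleR_2 trace_mult_adj2_add)
  also have "\<dots> = s" using d1 ss s0 by (simp add: field_simps)
  finally have tr1: "trace (transpose B ** G1 ** B) = s" .
  have "trace (transpose B ** G2 ** B) = (2 * det G2 + rel_trace G2 G1) / s"
    unfolding trace_congruence B(2) X_def trace_mult_scaleR_2 add.commute[of G1 G2] trace_mult_adj2_add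
    by simp
  also have "\<dots> = s" using d2 ss s0 by (simp add: field_simps rel_trace_comm[of G2])
  finally show ?thesis using tr1 B(1) by blast
qed

text \<open>Attainment: for a balancing \<open>B\<close> both largest eigenvalues equal \<open>larger_root s\<close>, whose
  square is \<open>larger_root (s\<^sup>2 - 2) = larger_root (rel_trace G1 G2)\<close>.\<close>
lemma lambda_max_balanced:
  assumes G1: "G1 \<in> SL_sym_pos" and G2: "G2 \<in> SL_sym_pos"
  shows "\<exists>B \<in> SL2. lambda_max (transpose B ** G1 ** B) = sqrt (larger_root (rel_trace G1 G2))
                 \<and> lambda_max (transpose B ** G2 ** B) = sqrt (larger_root (rel_trace G1 G2))"
proof -
  define s where "s = sqrt (rel_trace G1 G2 + 2)"
  obtain B where B: "det B = 1" "trace (transpose B ** G1 ** B) = s" "trace (transpose B ** G2 ** B) = s"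
    using balancing_congruence[OF G1 G2] unfolding s_def by blast
  have t: "rel_trace G1 G2 \<ge> 2" by (rule rel_trace_ge_2[OF G1 G2])
  then have ss: "s * s - 2 = rel_trace G1 G2" by (simp add: s_def)
  have "sqrt (2 * 2) \<le> s" unfolding s_def using t by (intro real_sqrt_le_mono) simp
  then have s2: "s \<ge> 2" by simp
  have "sqrt (larger_root (rel_trace G1 G2)) = larger_root s"
    using larger_root_square[OF s2] larger_root_ge_1[OF s2] ss by simp
  moreover have "lambda_max (transpose B ** G ** B) = larger_root s"
    if "G \<in> SL_sym_pos" "trace (transpose B ** G ** B) = s" for G
    using lambda_max_SL_sym_pos(1)[OF SL_sym_pos_congruence[OF that(1) B(1)]] that(2) by simp
  ultimately show ?thesis using B G1 G2 by (auto simp: SL2_def)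
qed

lemma lambda_max_congruence_ge_1:
  assumes "G \<in> SL_sym_pos" "B \<in> SL2"
  shows "lambda_max (transpose B ** G ** B) \<ge> 1"
  using assms SL_sym_pos_congruence lambda_max_SL_sym_pos(2) by (simp add: SL2_def)

lemma sqrt_mult_le_max:
  fixes m n x1 x2 y1 y2 :: real
  assumes "0 \<le> m" "0 \<le> n" "m \<le> x1 * x2" "n \<le> y1 * y2"
    and "0 \<le> x1" "0 \<le> x2" "0 \<le> y1" "0 \<le> y2"
  shows "sqrt (m * n) \<le> max (x1 * y1) (x2 * y2)"
proof -
  let ?z = "max (x1 * y1) (x2 * y2)"
  have z0: "0 \<le> ?z" using mult_nonneg_nonneg[OF assms(5,7)] by (simp add: le_max_iff_disj)
  have "m * n \<le> (x1 * x2) * (y1 * y2)" using assms by (intro mult_mono) auto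
  also have "\<dots> = (x1 * y1) * (x2 * y2)" by (simp add: algebra_simps)
  also have "\<dots> \<le> ?z * ?z" using assms z0 by (intro mult_mono) auto
  finally have "sqrt (m * n) \<le> sqrt (?z * ?z)" by (rule real_sqrt_le_mono)
  also have "\<dots> = ?z" using z0 by simp
  finally show ?thesis .
qed

lemma K_values_lower_bound:
  assumes G: "G1 \<in> SL_sym_pos" "G2 \<in> SL_sym_pos" and H: "H1 \<in> SL_sym_pos" "H2 \<in> SL_sym_pos"
    and x: "x \<in> K_values G1 G2 H1 H2"
  shows "sqrt (larger_root (rel_trace G1 G2) * larger_root (rel_trace H1 H2)) \<le> x"
proof -
  obtain A B where AB: "A \<in> SL2" "B \<in> SL2" and x_eq:
    "x = max (lambda_max (transpose B ** G1 ** B) * lambda_max (transpose A ** H1 ** A))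
             (lambda_max (transpose B ** G2 ** B) * lambda_max (transpose A ** H2 ** A))"
    using x unfolding K_values_def by blast
  have "0 \<le> larger_root (rel_trace G1 G2)" "0 \<le> larger_root (rel_trace H1 H2)"
    using larger_root_ge_1[OF rel_trace_ge_2[OF G]] larger_root_ge_1[OF rel_trace_ge_2[OF H]] by simp_all
  moreover have "0 \<le> lambda_max (transpose C ** M ** C)" if "M \<in> SL_sym_pos" "C \<in> SL2" for M C
    using lambda_max_congruence_ge_1[OF that] by simp
  ultimately show ?thesis using AB G H unfolding x_eq
    by (intro sqrt_mult_le_max lambda_max_product_lower_bound) (simp_all add: SL2_def)
qed

lemma K_values_attained:
  assumes G: "G1 \<in> SL_sym_pos" "G2 \<in> SL_sym_pos" and H: "H1 \<in> SL_sym_pos" "H2 \<in> SL_sym_pos"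
  shows "sqrt (larger_root (rel_trace G1 G2) * larger_root (rel_trace H1 H2)) \<in> K_values G1 G2 H1 H2"
proof -
  obtain B where "B \<in> SL2" "lambda_max (transpose B ** G1 ** B) = sqrt (larger_root (rel_trace G1 G2))"
    "lambda_max (transpose B ** G2 ** B) = sqrt (larger_root (rel_trace G1 G2))"
    using lambda_max_balanced[OF G] by blast
  moreover obtain A where "A \<in> SL2" "lambda_max (transpose A ** H1 ** A) = sqrt (larger_root (rel_trace H1 H2))"
    "lambda_max (transpose A ** H2 ** A) = sqrt (larger_root (rel_trace H1 H2))"
    using lambda_max_balanced[OF H] by blast
  ultimately have "sqrt (larger_root (rel_trace G1 G2) * larger_root (rel_trace H1 H2))
      = max (lambda_max (transpose B ** G1 ** B) * lambda_max (transpose A ** H1 ** A))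
            (lambda_max (transpose B ** G2 ** B) * lambda_max (transpose A ** H2 ** A))"
    by (simp add: real_sqrt_mult)
  with \<open>A \<in> SL2\<close> \<open>B \<in> SL2\<close> show ?thesis unfolding K_values_def by blast
qed

theorem mainTheorem7:
  assumes "G1 \<in> SL_sym_pos" and "G2 \<in> SL_sym_pos" and "H1 \<in> SL_sym_pos" and "H2 \<in> SL_sym_pos"
  shows "K_min G1 G2 H1 H2 =
           sqrt (lambda_max (inv_sqrt G1 ** G2 ** inv_sqrt G1) *
                 lambda_max (inv_sqrt H1 ** H2 ** inv_sqrt H1))
         \<and> K_min G1 G2 H1 H2 \<in> K_values G1 G2 H1 H2"
proof -
  let ?V = "sqrt (larger_root (rel_trace G1 G2) * larger_root (rel_trace H1 H2))"
  have attained: "?V \<in> K_values G1 G2 H1 H2"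
    using K_values_attained assms by blast
  have "K_min G1 G2 H1 H2 = ?V"
    unfolding K_min_def using attained K_values_lower_bound[OF assms] by (rule cInf_eq_minimum)
  moreover have "?V = sqrt (lambda_max (inv_sqrt G1 ** G2 ** inv_sqrt G1) *
                            lambda_max (inv_sqrt H1 ** H2 ** inv_sqrt H1))"
    using assms by (simp add: lambda_max_inv_sqrt)
  ultimately show ?thesis using attained by simp
qed

end
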